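(* Let $q\in\mathrm{prob}(\{0,1\}^2)$. The set $A:=\{(\pi_1,\chi^{(1)}_{0|0},\chi^{(1)}_{1|1},\chi^{(2)}_{0|0},\chi^{(2)}_{1|1}):(\pi,\chi)\in\Theta_2,\ \mu(\pi,\chi)=q\}$ is nonempty and equals the set of all $(\mathrm{Pr},\mathrm{Sp}_1,\mathrm{Se}_1,\mathrm{Sp}_2,\mathrm{Se}_2)\in[0,1]^5$ satisfying (a) $(1-\mathrm{Pr})(1-\mathrm{Sp}_1)+\mathrm{Pr}\,\mathrm{Se}_1=q_{1+}$, (b) $(1-\mathrm{Pr})(1-\mathrm{Sp}_2)+\mathrm{Pr}\,\mathrm{Se}_2=q_{+1}$, (c) $(1-\mathrm{Pr})\min\{\mathrm{Sp}_1,\mathrm{Sp}_2\}+\mathrm{Pr}\,(1-\max\{\mathrm{Se}_1,\mathrm{Se}_2\})\ge q_{00}$, (d) $(1-\mathrm{Pr})(\mathrm{Sp}_1+\mathrm{Sp}_2-1)^++\mathrm{Pr}\,(1-\mathrm{Se}_1-\mathrm{Se}_2)^+\le q_{00}$; equivalently, the set of all such quintuples in $[0,1]^5$ satisfying (e) $\mathrm{Pr}(\mathrm{Se}_2-\mathrm{Se}_1)=(1-\mathrm{Pr})(\mathrm{Sp}_2-\mathrm{Sp}_1)+q_{01}-q_{10}$, (f) $\mathrm{Pr}(\mathrm{Se}_1+\mathrm{Se}_2-1)=(1-\mathrm{Pr})(\mathrm{Sp}_1+\mathrm{Sp}_2-1)+q_{11}-q_{00}$, (g) $-q_{10}\le\mathrm{Pr}(\mathrm{Se}_2-\mathrm{Se}_1)\le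 q_{01}$, (h) $-q_{00}\le\mathrm{Pr}(\mathrm{Se}_1+\mathrm{Se}_2-1)\le q_{11}$.
   Context: $x^+:=\max\{x,0\}$. A subscript $+$ denotes summation over the replaced index, e.g. $q_{1+}=q_{10}+q_{11}$, $q_{+1}=q_{01}+q_{11}$. $\mathrm{prob}(\mathcal{X})$ is the set of probability densities on a finite set $\mathcal{X}$; $\mathrm{markov}(\mathcal{X},\mathcal{Y})$ the set of maps $(x,y)\mapsto p_{y|x}$ with $p_{\cdot|x}\in\mathrm{prob}(\mathcal{Y})$. $\Theta_2:=\mathrm{prob}(\{0,1\})\times\mathrm{markov}(\{0,1\},\{0,1\}^2)$, $\mu(\pi,\chi)_j:=\sum_{i=0}^1\pi_i\chi_{j|i}$ for $j\in\{0,1\}^2$, $\chi^{(1)}_{\iota|i}:=\chi_{\iota0|i}+\chi_{\iota1|i}$, $\chi^{(2)}_{\iota|i}:=\chi_{0\iota|i}+\chi_{1\iota|i}$. *)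

theory Defs
  imports Main Complex_Main
begin

definition prob :: "'a set \<Rightarrow> ('a \<Rightarrow> real) set" where
  "prob X = {p. (\<forall>x\<in>X. 0 \<le> p x) \<and> (\<forall>x. x \<notin> X \<longrightarrow> p x = 0) \<and> (\<Sum>x\<in>X. p x) = 1}"

text \<open>Markov kernels: chi x y = p_{y|x}, with chi x a density on Y for x in X
  (extensional: zero for x outside X).\<close>
definition markov :: "'a set \<Rightarrow> 'b set \<Rightarrow> ('a \<Rightarrow> 'b \<Rightarrow> real) set" where
  "markov X Y = {chi. (\<forall>x\<in>X. chi x \<in> prob Y) \<and> (\<forall>x. x \<notin> X \<longrightarrow> chi x = (\<lambda>_. 0))}"

definition bit :: "nat set" where "bit = {0, 1}"

definition Theta2 :: "((nat \<Rightarrow> real) \<times> (nat \<Rightarrow> nat \<times> nat \<Rightarrow> real)) set" where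
  "Theta2 = prob bit \<times> markov bit (bit \<times> bit)"

definition mu :: "(nat \<Rightarrow> real) \<Rightarrow> (nat \<Rightarrow> nat \<times> nat \<Rightarrow> real) \<Rightarrow> nat \<times> nat \<Rightarrow> real" where
  "mu \<pi> \<chi> j = (\<Sum>i\<in>bit. \<pi> i * \<chi> i j)"

text \<open>chi1 \<chi> \<iota> i = \<chi>^{(1)}_{\<iota>|i}, chi2 \<chi> \<iota> i = \<chi>^{(2)}_{\<iota>|i}.\<close>
definition chi1 :: "(nat \<Rightarrow> nat \<times> nat \<Rightarrow> real) \<Rightarrow> nat \<Rightarrow> nat \<Rightarrow> real" where
  "chi1 \<chi> \<iota> i = \<chi> i (\<iota>, 0) + \<chi> i (\<iota>, 1)"

definition chi2 :: "(nat \<Rightarrow> nat \<times> nat \<Rightarrow> real) \<Rightarrow> nat \<Rightarrow> nat \<Rightarrow> real" where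
  "chi2 \<chi> \<iota> i = \<chi> i (0, \<iota>) + \<chi> i (1, \<iota>)"

definition pos_part :: "real \<Rightarrow> real" where "pos_part x = max x 0"

end

theory Submission
  imports Defs
begin

text \<open>A density on \<open>{0,1}\<^sup>2\<close> with margins \<open>u\<close> (first coordinate 0) and \<open>w\<close> (second
  coordinate 0) is determined by its \<open>(0,0)\<close> entry \<open>t\<close>, which may be any point of the
  Frechet interval \<open>[(u + w - 1)\<^sup>+, min u w]\<close>. Hence \<open>(Pr, Sp\<^sub>1, Se\<^sub>1, Sp\<^sub>2, Se\<^sub>2)\<close> is
  attained iff the margins of \<open>q\<close> are the \<open>(1 - Pr, Pr)\<close>-mixtures of the class margins,
  which is (a) and (b), and \<open>q\<^sub>0\<^sub>0\<close> is the same mixture of a point of the class-0 Frechet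
  interval and a point of the class-1 one, which is (c) and (d). Writing the piecewise
  linear conditions (c) and (d) as finitely many linear inequalities in \<open>Pr\<close> and the
  products \<open>Pr \<cdot> Se\<^sub>k\<close> turns them, in the presence of (a) and (b), into (g) and (h).\<close>

lemma sum_bit: "(\<Sum>i\<in>bit. f i) = f 0 + f 1"
  by (simp add: bit_def)

lemma bit_times_bit: "bit \<times> bit = {(0,0), (0,1), (1,0), (1,1)}"
  by (auto simp: bit_def)

lemma prob_bit_iff:
  "p \<in> prob bit \<longleftrightarrow> 0 \<le> p 0 \<and> 0 \<le> p 1 \<and> p 0 + p 1 = 1 \<and> (\<forall>i. i \<notin> bit \<longrightarrow> p i = 0)"
  unfolding prob_def sum_bit by (auto simp: bit_def)

lemma prob_bit_times_bit_iff:
  "p \<in> prob (bit \<times> bit) \<longleftrightarrow>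
     0 \<le> p (0,0) \<and> 0 \<le> p (0,1) \<and> 0 \<le> p (1,0) \<and> 0 \<le> p (1,1) \<and>
     p (0,0) + p (0,1) + p (1,0) + p (1,1) = 1 \<and> (\<forall>x. x \<notin> bit \<times> bit \<longrightarrow> p x = 0)"
  unfolding prob_def bit_times_bit by (auto simp: add.assoc)

definition margin_table :: "real \<Rightarrow> real \<Rightarrow> real \<Rightarrow> nat \<times> nat \<Rightarrow> real" where
  "margin_table u w t x =
     (if x = (0,0) then t else if x = (0,1) then u - t else if x = (1,0) then w - t
      else if x = (1,1) then 1 - u - w + t else 0)"

lemma margin_table_simps [simp]:
  "margin_table u w t (0,0) = t" "margin_table u w t (0,1) = u - t" "margin_table u w t (1,0) = w - t"
  by (simp_all add: margin_table_def)

lemma prob_eq_margin_table: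
  assumes "p \<in> prob (bit \<times> bit)"
  shows "p = margin_table (p (0,0) + p (0,1)) (p (0,0) + p (1,0)) (p (0,0))"
proof
  fix x :: "nat \<times> nat"
  show "p x = margin_table (p (0,0) + p (0,1)) (p (0,0) + p (1,0)) (p (0,0)) x"
  proof (cases "x \<in> bit \<times> bit")
    case True
    then show ?thesis
      using assms[unfolded prob_bit_times_bit_iff] by (auto simp: bit_times_bit margin_table_def)
  next
    case False
    then have "p x = 0" using assms unfolding prob_def by blast
    with False show ?thesis by (auto simp: bit_times_bit margin_table_def)
  qed
qed

lemma margin_table_eq_iff:
  "margin_table u w t = margin_table u' w' t' \<longleftrightarrow> u = u' \<and> w = w' \<and> t = t'"
proof
  assume "margin_table u w t = margin_table u' w' t'"
  from fun_cong[OF this, of "(0,0)"] fun_cong[OF this, of "(0,1)"] fun_cong[OF this, of "(1,0)"]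
  show "u = u' \<and> w = w' \<and> t = t'" by (simp add: margin_table_def)
qed simp

lemma margin_table_mixture:
  "(\<lambda>x. (1 - p) * margin_table u w t x + p * margin_table u' w' t' x) =
     margin_table ((1 - p) * u + p * u') ((1 - p) * w + p * w') ((1 - p) * t + p * t')"
  by (auto simp: margin_table_def algebra_simps)

lemma margin_table_in_prob_iff:
  "margin_table u w t \<in> prob (bit \<times> bit) \<longleftrightarrow> pos_part (u + w - 1) \<le> t \<and> t \<le> min u w"
  unfolding prob_bit_times_bit_iff by (auto simp: margin_table_def pos_part_def bit_def)

lemma prob_with_margins_iff:
  "a \<in> prob (bit \<times> bit) \<and> u = a (0,0) + a (0,1) \<and> w = a (0,0) + a (1,0) \<longleftrightarrow>
     (\<exists>t. pos_part (u + w - 1) \<le> t \<and> t \<le> min u w \<and> a = margin_table u w t)"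
proof
  assume "a \<in> prob (bit \<times> bit) \<and> u = a (0,0) + a (0,1) \<and> w = a (0,0) + a (1,0)"
  then have "a = margin_table u w (a (0,0))" "a \<in> prob (bit \<times> bit)"
    using prob_eq_margin_table by blast+
  then show "\<exists>t. pos_part (u + w - 1) \<le> t \<and> t \<le> min u w \<and> a = margin_table u w t"
    using margin_table_in_prob_iff by metis
qed (auto simp: margin_table_in_prob_iff margin_table_def)

lemma convex_combination_of_intervals_iff:
  fixes p L0 U0 L1 U1 c :: real
  assumes "0 \<le> p" "p \<le> 1"
  shows "(\<exists>t s. L0 \<le> t \<and> t \<le> U0 \<and> L1 \<le> s \<and> s \<le> U1 \<and> (1 - p) * t + p * s = c) \<longleftrightarrow>
    L0 \<le> U0 \<and> L1 \<le> U1 \<and> (1 - p) * L0 + p * L1 \<le> c \<and> c \<le> (1 - p) * U0 + p * U1"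
    (is "?attained \<longleftrightarrow> L0 \<le> U0 \<and> L1 \<le> U1 \<and> ?lo \<le> c \<and> c \<le> ?hi")
proof
  assume ?attained
  then obtain t s where "L0 \<le> t" "t \<le> U0" "L1 \<le> s" "s \<le> U1" "(1 - p) * t + p * s = c"
    by blast
  with assms show "L0 \<le> U0 \<and> L1 \<le> U1 \<and> ?lo \<le> c \<and> c \<le> ?hi"
    by (smt (verit) mult_left_mono)
next
  assume bounds: "L0 \<le> U0 \<and> L1 \<le> U1 \<and> ?lo \<le> c \<and> c \<le> ?hi"
  show ?attained
  proof (cases "?lo = ?hi")
    case True
    with bounds show ?thesis by (intro exI[of _ L0] exI[of _ L1]) auto
  next
    case False
    with bounds have "?lo < ?hi" by linarith
    define l where "l = (c - ?lo) / (?hi - ?lo)"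
    have l: "0 \<le> l" "l \<le> 1" "?lo + l * (?hi - ?lo) = c"
      using \<open>?lo < ?hi\<close> bounds by (auto simp: l_def field_simps)
    have "(1 - p) * (L0 + l * (U0 - L0)) + p * (L1 + l * (U1 - L1)) = ?lo + l * (?hi - ?lo)"
      by (simp add: algebra_simps)
    moreover have "l * (U0 - L0) \<le> U0 - L0" "l * (U1 - L1) \<le> U1 - L1"
      using l bounds by (simp_all add: mult_left_le_one_le)
    ultimately show ?thesis
      using l bounds by (intro exI[of _ "L0 + l * (U0 - L0)"] exI[of _ "L1 + l * (U1 - L1)"]) auto
  qed
qed

lemma Theta2_iff:
  "(\<pi>, \<chi>) \<in> Theta2 \<longleftrightarrow> \<pi> \<in> prob bit \<and> \<chi> 0 \<in> prob (bit \<times> bit) \<and> \<chi> 1 \<in> prob (bit \<times> bit) \<and>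
     (\<forall>i. i \<notin> bit \<longrightarrow> \<chi> i = (\<lambda>_. 0))"
  by (auto simp: Theta2_def markov_def bit_def)

lemma mu_eq: "mu \<pi> \<chi> = (\<lambda>x. \<pi> 0 * \<chi> 0 x + \<pi> 1 * \<chi> 1 x)"
  by (rule ext) (simp add: mu_def sum_bit)

definition identified_set :: "(nat \<times> nat \<Rightarrow> real) \<Rightarrow> (real \<times> real \<times> real \<times> real \<times> real) set" where
  "identified_set q = {(\<pi> 1, chi1 \<chi> 0 0, chi1 \<chi> 1 1, chi2 \<chi> 0 0, chi2 \<chi> 1 1) | \<pi> \<chi>.
                         (\<pi>, \<chi>) \<in> Theta2 \<and> mu \<pi> \<chi> = q}"

lemma mem_identified_set_iff_mixture:
  "(p, u, v, w, z) \<in> identified_set q \<longleftrightarrow> p \<in> {0..1} \<and>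
     (\<exists>a b. (a \<in> prob (bit \<times> bit) \<and> u = a (0,0) + a (0,1) \<and> w = a (0,0) + a (1,0)) \<and>
       (b \<in> prob (bit \<times> bit) \<and> 1 - v = b (0,0) + b (0,1) \<and> 1 - z = b (0,0) + b (1,0)) \<and>
       q = (\<lambda>x. (1 - p) * a x + p * b x))"
  (is "_ \<longleftrightarrow> ?mixture")
proof
  assume "(p, u, v, w, z) \<in> identified_set q"
  then obtain \<pi> \<chi> where
    params: "p = \<pi> 1" "u = chi1 \<chi> 0 0" "v = chi1 \<chi> 1 1" "w = chi2 \<chi> 0 0" "z = chi2 \<chi> 1 1" and
    \<Theta>: "(\<pi>, \<chi>) \<in> Theta2" and q: "mu \<pi> \<chi> = q"
    unfolding identified_set_def by blast
  have \<pi>: "0 \<le> \<pi> 0" "0 \<le> \<pi> 1" "\<pi> 0 = 1 - p"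
    using \<Theta> params(1) by (auto simp: Theta2_iff prob_bit_iff)
  have a: "\<chi> 0 \<in> prob (bit \<times> bit)" and b: "\<chi> 1 \<in> prob (bit \<times> bit)"
    using \<Theta> by (auto simp: Theta2_iff)
  have "1 - v = \<chi> 1 (0,0) + \<chi> 1 (0,1)" "1 - z = \<chi> 1 (0,0) + \<chi> 1 (1,0)"
    using b params(3,5) by (auto simp: prob_bit_times_bit_iff chi1_def chi2_def)
  with \<pi> a b q params show ?mixture
    by (intro conjI exI[of _ "\<chi> 0"] exI[of _ "\<chi> 1"]) (auto simp: mu_eq chi1_def chi2_def)
next
  assume ?mixture
  then obtain a b where p: "p \<in> {0..1}" and a: "a \<in> prob (bit \<times> bit)" and b: "b \<in> prob (bit \<times> bit)"
    and q: "q = (\<lambda>x. (1 - p) * a x + p * b x)"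
    and margins: "u = a (0,0) + a (0,1)" "w = a (0,0) + a (1,0)"
      "1 - v = b (0,0) + b (0,1)" "1 - z = b (0,0) + b (1,0)"
    by blast
  define \<pi> :: "nat \<Rightarrow> real" where "\<pi> i = (if i = 0 then 1 - p else if i = 1 then p else 0)" for i
  define \<chi> :: "nat \<Rightarrow> nat \<times> nat \<Rightarrow> real" where
    "\<chi> i = (if i = 0 then a else if i = 1 then b else (\<lambda>_. 0))" for i
  have "\<pi> \<in> prob bit"
    using p unfolding prob_bit_iff by (auto simp: \<pi>_def bit_def)
  with a b have "(\<pi>, \<chi>) \<in> Theta2"
    by (auto simp: Theta2_iff \<chi>_def bit_def)
  moreover have "mu \<pi> \<chi> = q"
    by (simp add: mu_eq q \<pi>_def \<chi>_def)
  moreover have "(p, u, v, w, z) = (\<pi> 1, chi1 \<chi> 0 0, chi1 \<chi> 1 1, chi2 \<chi> 0 0, chi2 \<chi> 1 1)"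
    using b margins by (auto simp: \<pi>_def \<chi>_def chi1_def chi2_def prob_bit_times_bit_iff)
  ultimately show "(p, u, v, w, z) \<in> identified_set q"
    unfolding identified_set_def by blast
qed

lemma mem_identified_set_iff_frechet:
  assumes "q \<in> prob (bit \<times> bit)"
  shows "(p, u, v, w, z) \<in> identified_set q \<longleftrightarrow> p \<in> {0..1} \<and>
     (1 - p) * u + p * (1 - v) = q (0,0) + q (0,1) \<and> (1 - p) * w + p * (1 - z) = q (0,0) + q (1,0) \<and>
     (\<exists>t s. pos_part (u + w - 1) \<le> t \<and> t \<le> min u w \<and> pos_part (1 - v - z) \<le> s \<and> s \<le> 1 - max v z \<and>
        (1 - p) * t + p * s = q (0,0))"
proof -
  have "(p, u, v, w, z) \<in> identified_set q \<longleftrightarrow> p \<in> {0..1} \<and>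
     (\<exists>t s. pos_part (u + w - 1) \<le> t \<and> t \<le> min u w \<and>
        pos_part ((1 - v) + (1 - z) - 1) \<le> s \<and> s \<le> min (1 - v) (1 - z) \<and>
        q = (\<lambda>x. (1 - p) * margin_table u w t x + p * margin_table (1 - v) (1 - z) s x))"
    unfolding mem_identified_set_iff_mixture prob_with_margins_iff by blast
  moreover have "(1 - v) + (1 - z) - 1 = 1 - v - z" "min (1 - v) (1 - z) = 1 - max v z"
    by (auto simp: min_def max_def)
  moreover have "q = (\<lambda>x. (1 - p) * margin_table u w t x + p * margin_table (1 - v) (1 - z) s x) \<longleftrightarrow>
      (1 - p) * u + p * (1 - v) = q (0,0) + q (0,1) \<and> (1 - p) * w + p * (1 - z) = q (0,0) + q (1,0) \<and>
      (1 - p) * t + p * s = q (0,0)" for t s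
    unfolding margin_table_mixture
    by (subst prob_eq_margin_table[OF assms]) (auto simp: margin_table_eq_iff)
  ultimately show ?thesis
    by (simp only:) blast
qed

lemma mem_identified_set_iff_accuracy:
  assumes q: "q \<in> prob (bit \<times> bit)"
  shows "(p, u, v, w, z) \<in> identified_set q \<longleftrightarrow>
     p \<in> {0..1} \<and> u \<in> {0..1} \<and> v \<in> {0..1} \<and> w \<in> {0..1} \<and> z \<in> {0..1} \<and>
     (1 - p) * (1 - u) + p * v = q (1,0) + q (1,1) \<and>
     (1 - p) * (1 - w) + p * z = q (0,1) + q (1,1) \<and>
     (1 - p) * min u w + p * (1 - max v z) \<ge> q (0,0) \<and>
     (1 - p) * pos_part (u + w - 1) + p * pos_part (1 - v - z) \<le> q (0,0)"
proof -
  have total: "q (0,0) + q (0,1) + q (1,0) + q (1,1) = 1"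
    using q by (simp add: prob_bit_times_bit_iff)
  have "(1 - p) * (1 - u) + p * v = 1 - ((1 - p) * u + p * (1 - v))"
       "(1 - p) * (1 - w) + p * z = 1 - ((1 - p) * w + p * (1 - z))"
    by (simp_all add: algebra_simps)
  with total have "(1 - p) * (1 - u) + p * v = q (1,0) + q (1,1) \<longleftrightarrow>
                     (1 - p) * u + p * (1 - v) = q (0,0) + q (0,1)"
                  "(1 - p) * (1 - w) + p * z = q (0,1) + q (1,1) \<longleftrightarrow>
                     (1 - p) * w + p * (1 - z) = q (0,0) + q (1,0)"
    by linarith+
  moreover have "pos_part (u + w - 1) \<le> min u w \<longleftrightarrow> u \<in> {0..1} \<and> w \<in> {0..1}"
                "pos_part (1 - v - z) \<le> 1 - max v z \<longleftrightarrow> v \<in> {0..1} \<and> z \<in> {0..1}"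
    by (auto simp: pos_part_def)
  ultimately show ?thesis
    unfolding mem_identified_set_iff_frechet[OF q]
    using convex_combination_of_intervals_iff[of p "pos_part (u + w - 1)" "min u w"
        "pos_part (1 - v - z)" "1 - max v z" "q (0,0)"]
    by auto
qed

lemma ge_min_plus_min_iff:
  fixes a b x y c :: real
  shows "c \<le> min a b + min x y \<longleftrightarrow> c \<le> a + x \<and> c \<le> a + y \<and> c \<le> b + x \<and> c \<le> b + y"
  by (auto simp: min_def)

lemma pos_part_plus_pos_part_le_iff:
  fixes a b c :: real
  shows "pos_part a + pos_part b \<le> c \<longleftrightarrow> a + b \<le> c \<and> a \<le> c \<and> b \<le> c \<and> 0 \<le> c"
  by (auto simp: pos_part_def)

lemma mult_pos_part: "0 \<le> k \<Longrightarrow> k * pos_part x = pos_part (k * x)"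
  for k x :: real
  by (simp add: pos_part_def max_mult_distrib_left)

lemma frechet_bounds_iff_joint_bounds:
  fixes p u v w z :: real
  assumes q: "q \<in> prob (bit \<times> bit)"
    and box: "0 \<le> p" "p \<le> 1" "0 \<le> u" "u \<le> 1" "0 \<le> v" "v \<le> 1" "0 \<le> w" "w \<le> 1" "0 \<le> z" "z \<le> 1"
    and margins: "(1 - p) * (1 - u) + p * v = q (1,0) + q (1,1)"
      "(1 - p) * (1 - w) + p * z = q (0,1) + q (1,1)"
  shows "(1 - p) * min u w + p * (1 - max v z) \<ge> q (0,0) \<and>
     (1 - p) * pos_part (u + w - 1) + p * pos_part (1 - v - z) \<le> q (0,0) \<longleftrightarrow>
     - q (1,0) \<le> p * (z - v) \<and> p * (z - v) \<le> q (0,1) \<and>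
     - q (0,0) \<le> p * (v + z - 1) \<and> p * (v + z - 1) \<le> q (1,1)"
proof -
  have min_form: "(1 - p) * min u w + p * (1 - max v z) =
      min ((1 - p) * u) ((1 - p) * w) + min (p * (1 - v)) (p * (1 - z))"
  proof -
    have "1 - max v z = min (1 - v) (1 - z)" by (auto simp: min_def max_def)
    with box show ?thesis by (simp add: min_mult_distrib_left)
  qed
  have pos_part_form: "(1 - p) * pos_part (u + w - 1) + p * pos_part (1 - v - z) =
      pos_part ((1 - p) * (u + w - 1)) + pos_part (p * (1 - v - z))"
    using box by (simp add: mult_pos_part)
  have "p * u \<le> p" "p * v \<le> p" "p * w \<le> p" "p * z \<le> p"
    "p * u \<le> u" "p * v \<le> v" "p * w \<le> w" "p * z \<le> z"
    "0 \<le> p * u" "0 \<le> p * v" "0 \<le> p * w" "0 \<le> p * z"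
    "0 \<le> (1 - p) * (1 - u)" "0 \<le> (1 - p) * (1 - v)" "0 \<le> (1 - p) * (1 - w)" "0 \<le> (1 - p) * (1 - z)"
    using box by (simp_all add: mult_left_le mult_left_le_one_le)
  moreover have "0 \<le> q (0,0)" "0 \<le> q (0,1)" "0 \<le> q (1,0)" "0 \<le> q (1,1)"
    "q (0,0) + q (0,1) + q (1,0) + q (1,1) = 1"
    using q by (simp_all add: prob_bit_times_bit_iff)
  ultimately show ?thesis
    using margins
    unfolding min_form pos_part_form ge_min_plus_min_iff pos_part_plus_pos_part_le_iff
    by (simp add: algebra_simps) linarith
qed

lemma accuracy_constraints_iff_joint_constraints:
  fixes p u v w z :: real
  assumes q: "q \<in> prob (bit \<times> bit)"
    and "p \<in> {0..1}" "u \<in> {0..1}" "v \<in> {0..1}" "w \<in> {0..1}" "z \<in> {0..1}"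
  shows "(1 - p) * (1 - u) + p * v = q (1,0) + q (1,1) \<and>
     (1 - p) * (1 - w) + p * z = q (0,1) + q (1,1) \<and>
     (1 - p) * min u w + p * (1 - max v z) \<ge> q (0,0) \<and>
     (1 - p) * pos_part (u + w - 1) + p * pos_part (1 - v - z) \<le> q (0,0)
   \<longleftrightarrow>
     p * (z - v) = (1 - p) * (w - u) + q (0,1) - q (1,0) \<and>
     p * (v + z - 1) = (1 - p) * (u + w - 1) + q (1,1) - q (0,0) \<and>
     - q (1,0) \<le> p * (z - v) \<and> p * (z - v) \<le> q (0,1) \<and>
     - q (0,0) \<le> p * (v + z - 1) \<and> p * (v + z - 1) \<le> q (1,1)"
proof -
  have "q (0,0) + q (0,1) + q (1,0) + q (1,1) = 1"
    using q by (simp add: prob_bit_times_bit_iff)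
  then have "(1 - p) * (1 - u) + p * v = q (1,0) + q (1,1) \<and>
      (1 - p) * (1 - w) + p * z = q (0,1) + q (1,1) \<longleftrightarrow>
      p * (z - v) = (1 - p) * (w - u) + q (0,1) - q (1,0) \<and>
      p * (v + z - 1) = (1 - p) * (u + w - 1) + q (1,1) - q (0,0)"
    by (simp add: algebra_simps) linarith
  moreover have "0 \<le> p" "p \<le> 1" "0 \<le> u" "u \<le> 1" "0 \<le> v" "v \<le> 1" "0 \<le> w" "w \<le> 1" "0 \<le> z" "z \<le> 1"
    using assms(2-) by auto
  ultimately show ?thesis
    using frechet_bounds_iff_joint_bounds[OF q] by blast
qed

lemma mem_identified_set_iff_joint:
  assumes q: "q \<in> prob (bit \<times> bit)"
  shows "(p, u, v, w, z) \<in> identified_set q \<longleftrightarrow>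
     p \<in> {0..1} \<and> u \<in> {0..1} \<and> v \<in> {0..1} \<and> w \<in> {0..1} \<and> z \<in> {0..1} \<and>
     p * (z - v) = (1 - p) * (w - u) + q (0,1) - q (1,0) \<and>
     p * (v + z - 1) = (1 - p) * (u + w - 1) + q (1,1) - q (0,0) \<and>
     - q (1,0) \<le> p * (z - v) \<and> p * (z - v) \<le> q (0,1) \<and>
     - q (0,0) \<le> p * (v + z - 1) \<and> p * (v + z - 1) \<le> q (1,1)"
  unfolding mem_identified_set_iff_accuracy[OF q]
  \<comment> \<open>\<open>conj_cong\<close> peels off the common box conditions, which become the hypotheses of
      the previous lemma\<close>
  by ((rule conj_cong[OF refl])+, rule accuracy_constraints_iff_joint_constraints[OF q], assumption+)

theorem lemma3:
  fixes q :: "nat \<times> nat \<Rightarrow> real"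
  assumes "q \<in> prob (bit \<times> bit)"
  defines "A \<equiv> {(\<pi> 1, chi1 \<chi> 0 0, chi1 \<chi> 1 1, chi2 \<chi> 0 0, chi2 \<chi> 1 1) | \<pi> \<chi>.
                  (\<pi>, \<chi>) \<in> Theta2 \<and> mu \<pi> \<chi> = q}"
  shows "A \<noteq> {}
    \<and> A = {(Pr, Sp1, Se1, Sp2, Se2).
             Pr \<in> {0..1} \<and> Sp1 \<in> {0..1} \<and> Se1 \<in> {0..1} \<and> Sp2 \<in> {0..1} \<and> Se2 \<in> {0..1} \<and>
             (1 - Pr) * (1 - Sp1) + Pr * Se1 = q (1,0) + q (1,1) \<and>
             (1 - Pr) * (1 - Sp2) + Pr * Se2 = q (0,1) + q (1,1) \<and>
             (1 - Pr) * min Sp1 Sp2 + Pr * (1 - max Se1 Se2) \<ge> q (0,0) \<and>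
             (1 - Pr) * pos_part (Sp1 + Sp2 - 1) + Pr * pos_part (1 - Se1 - Se2) \<le> q (0,0)}
    \<and> A = {(Pr, Sp1, Se1, Sp2, Se2).
             Pr \<in> {0..1} \<and> Sp1 \<in> {0..1} \<and> Se1 \<in> {0..1} \<and> Sp2 \<in> {0..1} \<and> Se2 \<in> {0..1} \<and>
             Pr * (Se2 - Se1) = (1 - Pr) * (Sp2 - Sp1) + q (0,1) - q (1,0) \<and>
             Pr * (Se1 + Se2 - 1) = (1 - Pr) * (Sp1 + Sp2 - 1) + q (1,1) - q (0,0) \<and>
             - q (1,0) \<le> Pr * (Se2 - Se1) \<and> Pr * (Se2 - Se1) \<le> q (0,1) \<and>
             - q (0,0) \<le> Pr * (Se1 + Se2 - 1) \<and> Pr * (Se1 + Se2 - 1) \<le> q (1,1)}"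
  unfolding A_def identified_set_def[symmetric]
proof (intro conjI)
  \<comment> \<open>prevalence 0, with both class tables equal to \<open>q\<close>\<close>
  have "(0, q (0,0) + q (0,1), 1 - (q (0,0) + q (0,1)), q (0,0) + q (1,0), 1 - (q (0,0) + q (1,0)))
      \<in> identified_set q"
    using assms(1) unfolding mem_identified_set_iff_mixture by (intro conjI exI[of _ q]) auto
  then show "identified_set q \<noteq> {}"
    by blast
qed (simp only: set_eq_iff split_paired_All mem_Collect_eq case_prod_conv simp_thms
       mem_identified_set_iff_accuracy[OF assms(1)],
     simp only: set_eq_iff split_paired_All mem_Collect_eq case_prod_conv simp_thms
       mem_identified_set_iff_joint[OF assms(1)])

end
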